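(* Let $q$ be a power of $2$ and let $F$ be a field of characteristic $2$ containing $\mathbb{F}_q$. Let $L\in F[x]$ be a $q$-polynomial of $q$-degree $n$ with distinct roots. Then, unless $q=n=2$, the Galois group of $L$ over $F$, considered as a permutation group on the $q^n-1$ roots of $L(x)/x$, is contained in the alternating group $A_{q^n-1}$.
   Context: A $q$-polynomial over a field $F\supseteq\mathbb{F}_q$ is a polynomial of the form $a_0x+a_1x^q+\cdots+a_nx^{q^n}\in F[x]$; if $a_n\neq 0$ its $q$-degree is $n$. *)

theory Defs
  imports "HOL-Computational_Algebra.Polynomial" "HOL-Combinatorics.Permutations"
begin

definition subfield :: "'k::field set \<Rightarrow> bool" where
  "subfield K \<longleftrightarrow> 0 \<in> K \<and> 1 \<in> K \<and>
     (\<forall>x\<in>K. \<forall>y\<in>K. x + y \<in> K \<and> x - y \<in> K \<and> x * y \<in> K) \<and>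
     (\<forall>x\<in>K. x \<noteq> 0 \<longrightarrow> inverse x \<in> K)"

definition gen_subfield :: "'k::field set \<Rightarrow> 'k set" where
  "gen_subfield S = \<Inter> {K. subfield K \<and> S \<subseteq> K}"

definition q_polynomial :: "nat \<Rightarrow> nat \<Rightarrow> 'k::field poly \<Rightarrow> bool" where
  "q_polynomial q n L \<longleftrightarrow> coeff L (q ^ n) \<noteq> 0 \<and>
     (\<forall>i. coeff L i \<noteq> 0 \<longrightarrow> (\<exists>j\<le>n. i = q ^ j))"

text \<open>Roots of L(x)/x, i.e. the nonzero roots of L in 'k.\<close>
definition nonzero_roots :: "'k::field poly \<Rightarrow> 'k set" where
  "nonzero_roots L = {x. poly L x = 0 \<and> x \<noteq> 0}"

text \<open>Splitting field of L over F inside 'k (assuming L splits in 'k).\<close>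
definition splitting_field :: "'k::field set \<Rightarrow> 'k poly \<Rightarrow> 'k set" where
  "splitting_field F L = gen_subfield (F \<union> {x. poly L x = 0})"

text \<open>Galois group of L over F: automorphisms of the splitting field E fixing F pointwise
  (represented as functions on 'k, only their values on E matter).\<close>
definition galois_group :: "'k::field set \<Rightarrow> 'k poly \<Rightarrow> ('k \<Rightarrow> 'k) set" where
  "galois_group F L = {\<sigma>. let E = splitting_field F L in
      bij_betw \<sigma> E E \<and>
      (\<forall>x\<in>E. \<forall>y\<in>E. \<sigma> (x + y) = \<sigma> x + \<sigma> y \<and> \<sigma> (x * y) = \<sigma> x * \<sigma> y) \<and>
      (\<forall>a\<in>F. \<sigma> a = a)}"

definition induced_perm :: "('k \<Rightarrow> 'k) \<Rightarrow> 'k set \<Rightarrow> 'k \<Rightarrow> 'k" where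
  "induced_perm \<sigma> R = (\<lambda>x. if x \<in> R then \<sigma> x else x)"

end

theory Submission
  imports Defs "HOL-Combinatorics.Cycles" "HOL-Computational_Algebra.Primes"
begin

text \<open>
  Since \<open>L\<close> is additive and \<open>\<bbbF>\<^sub>q\<close>-linear in characteristic 2, its roots form an
  \<open>n\<close>-dimensional \<open>\<bbbF>\<^sub>q\<close>-vector space \<open>V\<close>, on which every element of the Galois group acts as
  an \<open>\<bbbF>\<^sub>q\<close>-linear permutation \<open>g\<close>. Replacing \<open>g\<close> by an odd power of itself, which does not
  change its sign, we may assume that \<open>g\<close> has 2-power order, i.e.\ is unipotent.
  Let \<open>F\<^sub>j\<close> be the fixed space of \<open>g\<^bsup>2^j\<^esup>\<close>, the kernel of \<open>(g - 1)\<^bsup>2^j\<^esup>\<close>.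
  All cycles of \<open>g\<close> on \<open>F\<^sub>j\<^sub>+\<^sub>1 - F\<^sub>j\<close> have length \<open>2\<^bsup>j+1\<^esup>\<close>, so the sign of \<open>g\<close> is
  the parity of \<open>\<Sum>\<^sub>j |F\<^sub>j\<^sub>+\<^sub>1 - F\<^sub>j| / 2\<^bsup>j+1\<^esup>\<close>. As every \<open>|F\<^sub>j|\<close> is a power of \<open>q\<close>, the
  summands from index \<open>j\<close> on are even once \<open>2\<^bsup>j+2\<^esup>\<close> divides \<open>|F\<^sub>j|\<close>. This holds for \<open>j = 0\<close>
  unless \<open>q = 2\<close> and \<open>dim F\<^sub>0 = 1\<close>, and then the first two summands are odd and all later
  ones even, unless \<open>n = 2\<close>.
\<close>

section \<open>Parity of permutations\<close>

lemma evenperm_cycle_of_list: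
  "distinct cs \<Longrightarrow> evenperm (cycle_of_list cs) \<longleftrightarrow> even (length cs - 1)"
  by (induction cs rule: cycle_of_list.induct)
     (auto simp: evenperm_comp permutation_swap_id permutation_of_cycle evenperm_swap)

lemma permutes_split_off_cycle:
  fixes p :: "'a \<Rightarrow> 'a" and s :: 'a
  assumes "p permutes S" "finite S"
  defines "q \<equiv> \<lambda>y. if y \<in> S - set (support p s) then p y else y"
  shows "q permutes S - set (support p s)" and "p = cycle_of_list (support p s) \<circ> q"
proof -
  show "q permutes S - set (support p s)"
    unfolding q_def by (rule semidecomposition[OF assms(1,2)])
  have perm: "permutation p" using assms permutation_permutes by blast
  show "p = cycle_of_list (support p s) \<circ> q"
  proof
    fix a
    consider "a \<in> S - set (support p s)" | "a \<in> set (support p s)"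
      | "a \<notin> S" "a \<notin> set (support p s)"
      by blast
    then show "p a = (cycle_of_list (support p s) \<circ> q) a"
    proof cases
      case 1
      have "(p ^^ 1) a \<in> set (support p a)"
        unfolding support_set[OF perm] by blast
      with 1 have "p a \<notin> set (support p s)"
        using disjoint_support'[OF perm, of a s] by auto
      with 1 show ?thesis
        using id_outside_supp[of _ "support p s"] unfolding q_def by simp
    next
      case 2
      then show ?thesis using cycle_restrict[OF perm] unfolding q_def by simp
    next
      case 3
      then show ?thesis
        using id_outside_supp[OF 3(2)] assms(1) permutes_not_in unfolding q_def by fastforce
    qed
  qed
qed

lemma evenperm_uniform_cycle_length:
  fixes p :: "'a \<Rightarrow> 'a"
  assumes "p permutes S" "finite S" "d > 0" "\<forall>x\<in>S. least_power p x = d"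
  shows "d dvd card S \<and> (evenperm p \<longleftrightarrow> even ((d - 1) * (card S div d)))"
  using assms
proof (induction "card S" arbitrary: S p rule: less_induct)
  case less
  show ?case
  proof (cases "S = {}")
    case True
    then show ?thesis using less.prems(1) by simp
  next
    case False
    then obtain s where s: "s \<in> S" by blast
    have perm: "permutation p" using less.prems(1,2) permutation_permutes by blast
    define C where "C = set (support p s)"
    define q where "q = (\<lambda>y. if y \<in> S - C then p y else y)"
    have q_permutes: "q permutes S - C" and p_eq: "p = cycle_of_list (support p s) \<circ> q"
      using permutes_split_off_cycle[OF less.prems(1,2), of s] unfolding q_def C_def by blast+
    have distinct: "distinct (support p s)" using cycle_of_permutation[OF perm] .
    have length: "length (support p s) = d" using less.prems(4) s by simp
    have card_C: "card C = d" using distinct_card[OF distinct] length C_def by simp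
    have C_subset: "C \<subseteq> S"
      unfolding C_def using permutes_in_image[OF permutes_funpow[OF less.prems(1)]] s by auto
    have card_Diff: "card (S - C) = card S - d"
      using card_Diff_subset[OF _ C_subset] card_C unfolding C_def by simp
    have d_le: "d \<le> card S" using card_mono[OF less.prems(2) C_subset] card_C by simp
    have funpow_q: "(q ^^ i) x = (p ^^ i) x" if "x \<in> S - C" for x i
    proof (induction i)
      case (Suc i)
      have "(q ^^ i) x \<in> S - C"
        using permutes_in_image[OF permutes_funpow[OF q_permutes]] that by blast
      then show ?case using Suc by (simp add: q_def)
    qed simp
    have "\<forall>x\<in>S - C. least_power q x = d"
      using less.prems(4) funpow_q unfolding least_power_def by simp
    then have IH: "d dvd card (S - C) \<and> (evenperm q \<longleftrightarrow> even ((d - 1) * (card (S - C) div d)))"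
      using less.hyps[OF _ q_permutes _ less.prems(3)] card_Diff d_le less.prems(2,3) by simp
    have "permutation q" using q_permutes less.prems(2) permutation_permutes by blast
    then have "evenperm p \<longleftrightarrow> (even (d - 1) \<longleftrightarrow> evenperm q)"
      using evenperm_comp[OF permutation_of_cycle, of q "support p s"] p_eq
        evenperm_cycle_of_list[OF distinct] length by simp
    moreover obtain k where k: "card (S - C) = d * k" using IH by blast
    moreover have "card S = d * (k + 1)" using card_Diff d_le k by simp
    ultimately show ?thesis using IH less.prems(3) by auto
  qed
qed

lemma dvd_prime_power_Suc_eq:
  fixes p :: nat
  assumes "prime p" "d dvd p ^ Suc j" "\<not> d dvd p ^ j"
  shows "d = p ^ Suc j"
proof -
  obtain i where "i \<le> Suc j" "d = p ^ i"
    using assms(2) divides_primepow_nat[OF assms(1)] by blast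
  moreover have "\<not> i \<le> j" using assms(3) \<open>d = p ^ i\<close> le_imp_power_dvd by blast
  ultimately show ?thesis by (simp add: le_Suc_eq)
qed

lemma evenperm_funpow:
  assumes "permutation p"
  shows "evenperm (p ^^ n) \<longleftrightarrow> even n \<or> evenperm p"
proof (induction n)
  case (Suc n)
  have "evenperm (p ^^ Suc n) \<longleftrightarrow> (evenperm p \<longleftrightarrow> evenperm (p ^^ n))"
    using evenperm_comp[OF assms permutation_funpow[OF assms], of n]
    by (simp only: funpow.simps(2))
  then show ?case using Suc by (auto simp del: funpow.simps)
qed simp

lemma induced_perm_apply [simp]:
  "x \<in> A \<Longrightarrow> induced_perm f A x = f x"
  "x \<notin> A \<Longrightarrow> induced_perm f A x = x"
  by (simp_all add: induced_perm_def)

lemma induced_perm_permutes: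
  assumes "finite A" "inj_on f A" "f ` A \<subseteq> A"
  shows "induced_perm f A permutes A"
proof -
  have "bij_betw f A A" using assms by (simp add: bij_betw_def endo_inj_surj)
  then have "restrict_id f A permutes A" by (rule permutes_restrict_id)
  then show ?thesis by (simp add: induced_perm_def restrict_id_def)
qed

lemma induced_perm_Diff_fixpoint:
  "f a = a \<Longrightarrow> induced_perm f (A - {a}) = induced_perm f A"
  by (auto simp: induced_perm_def)

lemma permutes_Diff_fixpoint:
  "p permutes A \<Longrightarrow> p a = a \<Longrightarrow> p permutes A - {a}"
  unfolding permutes_def by auto

section \<open>Subspaces over a finite subfield\<close>

lemma
  assumes "subfield K"
  shows subfield_zero: "0 \<in> K" and subfield_one: "1 \<in> K"
    and subfield_add: "x \<in> K \<Longrightarrow> y \<in> K \<Longrightarrow> x + y \<in> K"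
    and subfield_diff: "x \<in> K \<Longrightarrow> y \<in> K \<Longrightarrow> x - y \<in> K"
    and subfield_mult: "x \<in> K \<Longrightarrow> y \<in> K \<Longrightarrow> x * y \<in> K"
    and subfield_inverse: "x \<in> K \<Longrightarrow> x \<noteq> 0 \<Longrightarrow> inverse x \<in> K"
  using assms unfolding subfield_def by blast+

lemma subfield_card_gt_1:
  fixes K :: "'k::field set"
  assumes "subfield K" "finite K"
  shows "1 < card K"
proof -
  have "{0, 1} \<subseteq> K" using subfield_zero[OF assms(1)] subfield_one[OF assms(1)] by blast
  then have "card {0, 1 :: 'k} \<le> card K" by (rule card_mono[OF assms(2)])
  then show ?thesis by simp
qed

lemma subfield_power_card:
  assumes "subfield K" "finite K" "a \<in> K"
  shows "a ^ card K = a"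
proof (cases "a = 0")
  case True
  then show ?thesis using subfield_card_gt_1[OF assms(1,2)] by simp
next
  case False
  define K' where "K' = K - {0}"
  have finite: "finite K'" using assms(2) unfolding K'_def by simp
  have inj: "inj_on (\<lambda>x. a * x) K'" using False by (auto intro: inj_onI)
  have "(\<lambda>x. a * x) ` K' \<subseteq> K'" using False assms(3) subfield_mult[OF assms(1)] unfolding K'_def by auto
  then have "(\<lambda>x. a * x) ` K' = K'" using endo_inj_surj[OF finite _ inj] by blast
  then have "prod id K' = prod (\<lambda>x. a * x) K'" using prod.reindex[OF inj, of id] by simp
  also have "\<dots> = a ^ card K' * prod id K'" by (simp add: prod.distrib)
  finally have "a ^ card K' = 1"
    using finite unfolding K'_def by (simp add: prod_zero_iff)
  moreover have "card K = Suc (card K')"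
    using assms(2) subfield_zero[OF assms(1)] subfield_card_gt_1[OF assms(1,2)]
    unfolding K'_def by simp
  ultimately show ?thesis by simp
qed

lemma subfield_power_card_power:
  assumes "subfield K" "finite K" "a \<in> K"
  shows "a ^ (card K ^ j) = a"
proof (induction j)
  case (Suc j)
  then show ?case
    using subfield_power_card[OF assms] by (simp add: power_mult)
qed simp

definition subspace_over :: "'k::field set \<Rightarrow> 'k set \<Rightarrow> bool" where
  "subspace_over K A \<longleftrightarrow> 0 \<in> A \<and> (\<forall>x\<in>A. \<forall>y\<in>A. x + y \<in> A) \<and> (\<forall>c\<in>K. \<forall>x\<in>A. c * x \<in> A)"

lemma
  assumes "subspace_over K A"
  shows subspace_over_zero: "0 \<in> A"
    and subspace_over_add: "x \<in> A \<Longrightarrow> y \<in> A \<Longrightarrow> x + y \<in> A"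
    and subspace_over_scale: "c \<in> K \<Longrightarrow> x \<in> A \<Longrightarrow> c * x \<in> A"
  using assms unfolding subspace_over_def by blast+

lemma subspace_over_diff:
  assumes "subfield K" "subspace_over K A" "x \<in> A" "y \<in> A"
  shows "x - y \<in> A"
proof -
  have "- 1 \<in> K" using subfield_diff[OF assms(1) subfield_zero subfield_one] assms(1) by simp
  then have "x + (- 1) * y \<in> A"
    using assms subspace_over_add subspace_over_scale by blast
  then show ?thesis by simp
qed

lemma inj_on_subspace_over_adjoin:
  assumes "subfield K" "subspace_over K A" "b \<notin> A"
  shows "inj_on (\<lambda>(x, l). x + l * b) (A \<times> K)"
proof (rule inj_onI, clarify)
  fix x l x' l'
  assume x: "x \<in> A" "l \<in> K" "x' \<in> A" "l' \<in> K" and eq: "x + l * b = x' + l' * b"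
  show "x = x' \<and> l = l'"
  proof (cases "l = l'")
    case True
    then show ?thesis using eq by simp
  next
    case False
    then have "b = inverse (l - l') * (x' - x)"
      using eq by (simp add: field_simps)
    moreover have "x' - x \<in> A" using subspace_over_diff assms(1,2) x by blast
    moreover have "inverse (l - l') \<in> K"
      using False subfield_inverse[OF assms(1)] subfield_diff[OF assms(1)] x by simp
    ultimately have "b \<in> A" using subspace_over_scale[OF assms(2)] by simp
    then show ?thesis using assms(3) by blast
  qed
qed

lemma subspace_over_adjoin:
  assumes "subfield K" "subspace_over K A"
  shows "subspace_over K ((\<lambda>(x, l). x + l * b) ` (A \<times> K))"
  unfolding subspace_over_def
proof (intro conjI ballI)
  have "0 + 0 * b = 0" by simp
  then show "0 \<in> (\<lambda>(x, l). x + l * b) ` (A \<times> K)"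
    using subspace_over_zero[OF assms(2)] subfield_zero[OF assms(1)] by force
next
  fix y z assume "y \<in> (\<lambda>(x, l). x + l * b) ` (A \<times> K)" "z \<in> (\<lambda>(x, l). x + l * b) ` (A \<times> K)"
  then obtain x l x' l' where "y = x + l * b" "x \<in> A" "l \<in> K"
    and "z = x' + l' * b" "x' \<in> A" "l' \<in> K" by auto
  moreover have "y + z = (x + x') + (l + l') * b" if "y = x + l * b" "z = x' + l' * b"
    using that by (simp add: algebra_simps)
  ultimately show "y + z \<in> (\<lambda>(x, l). x + l * b) ` (A \<times> K)"
    using subspace_over_add[OF assms(2)] subfield_add[OF assms(1)] by force
next
  fix c y assume "c \<in> K" "y \<in> (\<lambda>(x, l). x + l * b) ` (A \<times> K)"
  moreover from this obtain x l where "y = x + l * b" "x \<in> A" "l \<in> K" by auto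
  moreover have "c * y = c * x + (c * l) * b" if "y = x + l * b"
    using that by (simp add: algebra_simps)
  ultimately show "c * y \<in> (\<lambda>(x, l). x + l * b) ` (A \<times> K)"
    using subspace_over_scale[OF assms(2)] subfield_mult[OF assms(1)] by force
qed

lemma card_subspace_over_power:
  assumes "subfield K" "finite K" "subspace_over K A" "subspace_over K B" "A \<subseteq> B" "finite B"
  shows "\<exists>e. card B = card K ^ e * card A \<and> (A \<noteq> B \<longrightarrow> 1 \<le> e)"
  using assms(3,5)
proof (induction "card B - card A" arbitrary: A rule: less_induct)
  case less
  show ?case
  proof (cases "A = B")
    case True
    then show ?thesis by (intro exI[of _ 0]) simp
  next
    case False
    then obtain b where b: "b \<in> B" "b \<notin> A" using less.prems(2) by blast
    define A' where "A' = (\<lambda>(x, l). x + l * b) ` (A \<times> K)"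
    have card_A': "card A' = card A * card K"
      unfolding A'_def using card_image[OF inj_on_subspace_over_adjoin[OF assms(1) less.prems(1) b(2)]]
      by (simp add: card_cartesian_product)
    have subspace_A': "subspace_over K A'"
      unfolding A'_def using subspace_over_adjoin[OF assms(1) less.prems(1)] .
    have "x = x + 0 * b" "b = 0 + 1 * b" for x by simp_all
    then have "A \<subseteq> A'" "b \<in> A'"
      unfolding A'_def using subfield_zero[OF assms(1)] subfield_one[OF assms(1)]
        subspace_over_zero[OF less.prems(1)] by force+
    moreover have "A' \<subseteq> B"
      unfolding A'_def using less.prems(2) b(1) subspace_over_add[OF assms(4)]
        subspace_over_scale[OF assms(4)] by auto
    moreover have "finite A'" using \<open>A' \<subseteq> B\<close> assms(6) finite_subset by blast
    ultimately have "card A < card A'" "card A' \<le> card B"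
      using psubset_card_mono[of A' A] card_mono[OF assms(6)] b(2) by blast+
    then have "card B - card A' < card B - card A" by simp
    then obtain e where "card B = card K ^ e * card A'"
      using less.hyps[OF _ subspace_A' \<open>A' \<subseteq> B\<close>] by blast
    then show ?thesis by (intro exI[of _ "Suc e"]) (simp add: card_A')
  qed
qed

section \<open>\<open>q\<close>-polynomials and the Galois group\<close>

lemma degree_q_polynomial:
  assumes "1 < q" "q_polynomial q n L"
  shows "degree L = q ^ n"
proof (rule antisym)
  show "degree L \<le> q ^ n"
  proof (rule degree_le, intro allI impI, rule ccontr)
    fix i assume "q ^ n < i" "coeff L i \<noteq> 0"
    then obtain j where "j \<le> n" "i = q ^ j" using assms(2) unfolding q_polynomial_def by blast
    then show False using \<open>q ^ n < i\<close> assms(1) by (simp add: power_increasing)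
  qed
  show "q ^ n \<le> degree L"
    using assms(2) le_degree unfolding q_polynomial_def by blast
qed

lemma poly_q_polynomial:
  assumes "1 < q" "q_polynomial q n L"
  shows "poly L x = (\<Sum>j\<le>n. coeff L (q ^ j) * x ^ (q ^ j))"
proof -
  have inj: "inj_on ((^) q) {..n}" using assms(1) by (auto intro: inj_onI simp: power_inject_exp)
  have "poly L x = (\<Sum>i\<le>q ^ n. coeff L i * x ^ i)"
    using poly_altdef[of L x] degree_q_polynomial[OF assms] by simp
  also have "\<dots> = (\<Sum>i\<in>(^) q ` {..n}. coeff L i * x ^ i)"
  proof (rule sum.mono_neutral_right)
    show "(^) q ` {..n} \<subseteq> {..q ^ n}" using assms(1) by (auto simp: power_increasing)
    show "\<forall>i\<in>{..q ^ n} - (^) q ` {..n}. coeff L i * x ^ i = 0"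
      using assms(2) unfolding q_polynomial_def by fastforce
  qed simp
  also have "\<dots> = (\<Sum>j\<le>n. coeff L (q ^ j) * x ^ (q ^ j))" using sum.reindex[OF inj] by simp
  finally show ?thesis .
qed

lemma poly_q_polynomial_add:
  fixes L :: "'k::field poly"
  assumes "prime CHAR('k)" "q = CHAR('k) ^ m" "1 < q" "q_polynomial q n L"
  shows "poly L (x + y) = poly L x + poly L y"
proof -
  have "(x + y) ^ (q ^ j) = x ^ (q ^ j) + y ^ (q ^ j)" for j
  proof -
    have "q ^ j = CHAR('k) ^ (m * j)" by (simp add: assms(2) power_mult)
    then show ?thesis by (rule freshmans_dream'[OF assms(1)])
  qed
  then show ?thesis
    unfolding poly_q_polynomial[OF assms(3,4)] by (simp add: distrib_left sum.distrib)
qed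

lemma poly_q_polynomial_scale:
  assumes "subfield K" "finite K" "card K = q" "q_polynomial q n L" "c \<in> K"
  shows "poly L (c * x) = c * poly L x"
proof -
  have "1 < q" using subfield_card_gt_1[OF assms(1,2)] assms(3) by simp
  then show ?thesis
    using subfield_power_card_power[OF assms(1,2,5)] assms(3)
    unfolding poly_q_polynomial[OF \<open>1 < q\<close> assms(4)]
    by (simp add: power_mult_distrib sum_distrib_left algebra_simps)
qed

lemma subspace_over_roots_q_polynomial:
  fixes L :: "'k::field poly"
  assumes "prime CHAR('k)" "q = CHAR('k) ^ m"
    and "subfield K" "finite K" "card K = q" "q_polynomial q n L"
  shows "subspace_over K {x. poly L x = 0}"
proof -
  have "1 < q" using subfield_card_gt_1[OF assms(3,4)] assms(5) by simp
  moreover have "poly L 0 = 0"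
    using poly_q_polynomial_scale[OF assms(3-6) subfield_zero[OF assms(3)], of 0] by simp
  ultimately show ?thesis
    unfolding subspace_over_def
    using poly_q_polynomial_add[OF assms(1,2) _ assms(6)] poly_q_polynomial_scale[OF assms(3-6)]
    by simp
qed

lemma
  shows subfield_gen_subfield: "subfield (gen_subfield S)"
    and subset_gen_subfield: "S \<subseteq> gen_subfield S"
  unfolding gen_subfield_def subfield_def by auto

lemma poly_hom_subfield:
  assumes "subfield E"
    and hom: "\<And>x y. x \<in> E \<Longrightarrow> y \<in> E \<Longrightarrow> \<sigma> (x + y) = \<sigma> x + \<sigma> y \<and> \<sigma> (x * y) = \<sigma> x * \<sigma> y"
    and "\<forall>i. coeff p i \<in> E \<and> \<sigma> (coeff p i) = coeff p i" "x \<in> E"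
  shows "\<sigma> (poly p x) = poly p (\<sigma> x) \<and> poly p x \<in> E"
  using assms(3)
proof (induction p)
  case 0
  have "\<sigma> (0 + 0) = \<sigma> 0 + \<sigma> 0" using hom subfield_zero[OF assms(1)] by blast
  then show ?case using subfield_zero[OF assms(1)] by (metis add_cancel_right_right poly_0)
next
  case (pCons a p)
  have "\<forall>i. coeff p i \<in> E \<and> \<sigma> (coeff p i) = coeff p i" "a \<in> E" "\<sigma> a = a"
    using pCons.prems by (metis coeff_pCons_Suc coeff_pCons_0)+
  then have IH: "\<sigma> (poly p x) = poly p (\<sigma> x)" "poly p x \<in> E" using pCons.IH by auto
  have "x * poly p x \<in> E" using subfield_mult[OF assms(1) assms(4) IH(2)] .
  then show ?case
    using hom IH assms(4) \<open>a \<in> E\<close> \<open>\<sigma> a = a\<close> subfield_add[OF assms(1)] by simp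
qed

lemma galois_group_roots:
  fixes F K :: "'k::field set" and L :: "'k poly"
  assumes "\<sigma> \<in> galois_group F L" "\<forall>i. coeff L i \<in> F" "K \<subseteq> F"
  defines "R \<equiv> {x. poly L x = 0}"
  shows "\<sigma> ` R \<subseteq> R" and "inj_on \<sigma> R" and "\<sigma> 0 = 0"
    and "\<And>x y. x \<in> R \<Longrightarrow> y \<in> R \<Longrightarrow> \<sigma> (x + y) = \<sigma> x + \<sigma> y"
    and "\<And>c x. c \<in> K \<Longrightarrow> x \<in> R \<Longrightarrow> \<sigma> (c * x) = c * \<sigma> x"
proof -
  define E where "E = splitting_field F L"
  have "subfield E" unfolding E_def splitting_field_def by (rule subfield_gen_subfield)
  moreover have "F \<union> R \<subseteq> E"
    unfolding E_def splitting_field_def R_def by (rule subset_gen_subfield)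
  ultimately have E: "subfield E" "F \<subseteq> E" "R \<subseteq> E" by auto
  have bij: "bij_betw \<sigma> E E" and fix_F: "\<And>a. a \<in> F \<Longrightarrow> \<sigma> a = a"
    and hom: "\<And>x y. x \<in> E \<Longrightarrow> y \<in> E \<Longrightarrow> \<sigma> (x + y) = \<sigma> x + \<sigma> y \<and> \<sigma> (x * y) = \<sigma> x * \<sigma> y"
    using assms(1) unfolding galois_group_def E_def Let_def by auto
  have poly_\<sigma>: "\<sigma> (poly p x) = poly p (\<sigma> x)"
    if "\<forall>i. coeff p i \<in> F" "x \<in> E" for p x
    using poly_hom_subfield[OF E(1) hom _ that(2)] that(1) E(2) fix_F by blast
  have "\<sigma> (0 + 0) = \<sigma> 0 + \<sigma> 0" using hom subfield_zero[OF E(1)] by blast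
  then show zero: "\<sigma> 0 = 0" by (metis add_cancel_right_right)
  show "\<sigma> ` R \<subseteq> R"
  proof
    fix y assume "y \<in> \<sigma> ` R"
    then obtain x where "x \<in> R" "y = \<sigma> x" by blast
    then show "y \<in> R" using poly_\<sigma>[OF assms(2), of x] E(3) zero unfolding R_def by auto
  qed
  show "inj_on \<sigma> R" using bij_betw_imp_inj_on[OF bij] E(3) inj_on_subset by blast
  show "\<sigma> (x + y) = \<sigma> x + \<sigma> y" if "x \<in> R" "y \<in> R" for x y
    using hom that E(3) by blast
  show "\<sigma> (c * x) = c * \<sigma> x" if "c \<in> K" "x \<in> R" for c x
  proof -
    have "c \<in> F" "x \<in> E" using that assms(3) E(3) by blast+
    then show ?thesis using hom[of c x] fix_F[of c] E(2) by auto
  qed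
qed

section \<open>Linear permutations in characteristic 2\<close>

lemma add_self_CHAR_2:
  assumes "CHAR('a::ring_1) = 2"
  shows "x + x = (0::'a)"
  using uminus_CHAR_2[OF assms, of x] by (metis add.right_inverse)

lemma card_subfield_CHAR_2:
  assumes "CHAR('k::field) = 2" "subfield K" "finite (K :: 'k set)"
  obtains m where "card K = 2 ^ m"
proof -
  have "subfield {0, 1 :: 'k}"
    using add_self_CHAR_2[OF assms(1), of "1 :: 'k"] unfolding subfield_def by auto
  moreover have "subspace_over {0, 1} {0 :: 'k}" "subspace_over {0, 1} K"
    using assms(2) unfolding subspace_over_def subfield_def by auto
  ultimately obtain e where "card K = card {0, 1 :: 'k} ^ e * card {0 :: 'k}"
    using card_subspace_over_power[of "{0, 1}" "{0}" K] assms(3) subfield_zero[OF assms(2)] by auto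
  then have "card K = 2 ^ e" by (simp add: numeral_2_eq_2)
  then show ?thesis by (rule that)
qed

locale unipotent_linear_perm =
  fixes K V :: "'k::field set" and u :: "'k \<Rightarrow> 'k" and N :: nat
  assumes CHAR_2: "CHAR('k) = 2"
    and subfield_K: "subfield K" and finite_K: "finite K"
    and subspace_V: "subspace_over K V" and finite_V: "finite V"
    and u_permutes: "u permutes V"
    and u_add: "\<And>x y. x \<in> V \<Longrightarrow> y \<in> V \<Longrightarrow> u (x + y) = u x + u y"
    and u_scale: "\<And>c x. c \<in> K \<Longrightarrow> x \<in> V \<Longrightarrow> u (c * x) = c * u x"
    and u_order: "u ^^ (2 ^ N) = id"
begin

lemma add_self: "x + x = (0::'k)"
  using add_self_CHAR_2[OF CHAR_2] .

lemma two_eq_zero: "(2::'k) = 0"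
  using of_nat_CHAR[where 'a='k] CHAR_2 by simp

lemma add_eq_0_iff_eq: "x + y = (0::'k) \<longleftrightarrow> x = y"
  using uminus_CHAR_2[OF CHAR_2, of x] add_eq_0_iff[of x y] by auto

lemmas V_zero = subspace_over_zero[OF subspace_V]
  and V_add = subspace_over_add[OF subspace_V]
  and V_scale = subspace_over_scale[OF subspace_V]

lemma funpow_u_in_V: "x \<in> V \<Longrightarrow> (u ^^ i) x \<in> V"
  using permutes_in_image[OF permutes_funpow[OF u_permutes]] by blast

lemma funpow_u_add: "x \<in> V \<Longrightarrow> y \<in> V \<Longrightarrow> (u ^^ i) (x + y) = (u ^^ i) x + (u ^^ i) y"
  by (induction i) (auto simp: u_add funpow_u_in_V)

lemma u_inj_on: "inj_on u V"
  using permutes_inj_on[OF u_permutes] .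

text \<open>In characteristic 2 this is \<open>u - id\<close>.\<close>

definition nilpotent_part :: "'k \<Rightarrow> 'k" where
  "nilpotent_part x = u x + x"

lemma nilpotent_part_in_V: "x \<in> V \<Longrightarrow> nilpotent_part x \<in> V"
  unfolding nilpotent_part_def using funpow_u_in_V[of x 1] V_add by simp

lemma nilpotent_part_add: "x \<in> V \<Longrightarrow> y \<in> V \<Longrightarrow> nilpotent_part (x + y) = nilpotent_part x + nilpotent_part y"
  unfolding nilpotent_part_def by (simp add: u_add algebra_simps)

lemma nilpotent_part_scale: "c \<in> K \<Longrightarrow> x \<in> V \<Longrightarrow> nilpotent_part (c * x) = c * nilpotent_part x"
  unfolding nilpotent_part_def by (simp add: u_scale algebra_simps)

lemma funpow_nilpotent_part_in_V: "x \<in> V \<Longrightarrow> (nilpotent_part ^^ i) x \<in> V"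
  by (induction i) (auto intro: nilpotent_part_in_V)

lemma funpow_nilpotent_part_add:
  "x \<in> V \<Longrightarrow> y \<in> V \<Longrightarrow>
    (nilpotent_part ^^ i) (x + y) = (nilpotent_part ^^ i) x + (nilpotent_part ^^ i) y"
  by (induction i) (auto simp: nilpotent_part_add funpow_nilpotent_part_in_V)

lemma funpow_nilpotent_part_scale:
  "c \<in> K \<Longrightarrow> x \<in> V \<Longrightarrow> (nilpotent_part ^^ i) (c * x) = c * (nilpotent_part ^^ i) x"
  by (induction i) (auto simp: nilpotent_part_scale funpow_nilpotent_part_in_V)

lemma funpow_nilpotent_part_2_power:
  "x \<in> V \<Longrightarrow> (nilpotent_part ^^ (2 ^ j)) x = (u ^^ (2 ^ j)) x + x"
proof (induction j arbitrary: x)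
  case 0
  then show ?case by (simp add: nilpotent_part_def)
next
  case (Suc j)
  let ?N = "nilpotent_part ^^ (2 ^ j)" and ?U = "u ^^ (2 ^ j)"
  have "(nilpotent_part ^^ (2 ^ Suc j)) x = ?N (?N x)"
    by (simp add: funpow_add mult_2)
  also have "\<dots> = ?U (?U x + x) + (?U x + x)"
    using Suc funpow_u_in_V V_add by simp
  also have "\<dots> = ?U (?U x) + (?U x + ?U x) + x"
    using funpow_u_add[OF funpow_u_in_V Suc.prems] Suc.prems by (simp add: algebra_simps)
  also have "\<dots> = (u ^^ (2 ^ Suc j)) x + x"
    by (simp add: add_self funpow_add mult_2)
  finally show ?case .
qed

definition kernel_power :: "nat \<Rightarrow> 'k set" where
  "kernel_power k = {x \<in> V. (nilpotent_part ^^ k) x = 0}"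

lemma funpow_nilpotent_part_zero: "(nilpotent_part ^^ k) 0 = 0"
  using funpow_nilpotent_part_scale[OF subfield_zero[OF subfield_K] V_zero] by simp

lemma subspace_kernel_power: "subspace_over K (kernel_power k)"
  unfolding subspace_over_def kernel_power_def
  using V_zero V_add V_scale funpow_nilpotent_part_zero funpow_nilpotent_part_add
    funpow_nilpotent_part_scale by auto

lemma kernel_power_subset: "kernel_power k \<subseteq> V"
  unfolding kernel_power_def by auto

lemma finite_kernel_power: "finite (kernel_power k)"
  using finite_subset[OF kernel_power_subset finite_V] .

lemma kernel_power_mono: "k \<le> l \<Longrightarrow> kernel_power k \<subseteq> kernel_power l"
  unfolding kernel_power_def
  using funpow_nilpotent_part_zero by (auto simp: le_iff_add funpow_add add.commute[of k])

lemma kernel_power_Suc_Suc: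
  assumes "kernel_power k = kernel_power (Suc k)"
  shows "kernel_power (Suc (Suc k)) = kernel_power (Suc k)"
proof
  show "kernel_power (Suc (Suc k)) \<subseteq> kernel_power (Suc k)"
  proof
    fix x assume x: "x \<in> kernel_power (Suc (Suc k))"
    then have "nilpotent_part x \<in> kernel_power (Suc k)"
      using nilpotent_part_in_V unfolding kernel_power_def
      by (auto simp del: funpow.simps simp: funpow_Suc_right)
    then have "nilpotent_part x \<in> kernel_power k" using assms by simp
    then show "x \<in> kernel_power (Suc k)"
      using x unfolding kernel_power_def by (auto simp del: funpow.simps simp: funpow_Suc_right)
  qed
qed (rule kernel_power_mono, simp)

lemma kernel_power_stable:
  assumes "kernel_power k = kernel_power (Suc k)" "k \<le> l"
  shows "kernel_power l = kernel_power k"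
proof -
  have "kernel_power l = kernel_power k \<and> kernel_power (Suc l) = kernel_power k"
    using assms(2)
  proof (induction l rule: dec_induct)
    case (step l)
    then show ?case using kernel_power_Suc_Suc[of l] by simp
  qed (use assms(1) in simp)
  then show ?thesis by simp
qed

lemma card_kernel_power_mono:
  "k \<le> l \<Longrightarrow> \<exists>e. card (kernel_power l) = card K ^ e * card (kernel_power k) \<and>
    (kernel_power k \<noteq> kernel_power l \<longrightarrow> 1 \<le> e)"
  by (rule card_subspace_over_power[OF subfield_K finite_K subspace_kernel_power
        subspace_kernel_power kernel_power_mono finite_kernel_power])

text \<open>The fibres of \<open>nilpotent_part\<close> are cosets of its kernel.\<close>

lemma card_kernel_power_Suc_le:
  "card (kernel_power (Suc k)) \<le> card (kernel_power 1) * card (kernel_power k)"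
proof -
  let ?A = "kernel_power (Suc k)"
  define fibre where "fibre y = {x \<in> ?A. nilpotent_part x = y}" for y
  have card_fibre: "card (fibre y) \<le> card (kernel_power 1)" for y
  proof (cases "fibre y = {}")
    case False
    then obtain x0 where x0: "x0 \<in> ?A" "nilpotent_part x0 = y" unfolding fibre_def by blast
    have "inj_on (\<lambda>x. x + x0) (fibre y)" by (auto intro: inj_onI)
    moreover have "(\<lambda>x. x + x0) ` fibre y \<subseteq> kernel_power 1"
      using x0 kernel_power_subset V_add nilpotent_part_add add_self
      unfolding fibre_def kernel_power_def by auto
    ultimately show ?thesis using card_inj_on_le finite_kernel_power by blast
  qed simp
  have image: "nilpotent_part ` ?A \<subseteq> kernel_power k"
    unfolding kernel_power_def using nilpotent_part_in_V
    by (auto simp del: funpow.simps simp: funpow_Suc_right)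
  have "?A = (\<Union>y\<in>nilpotent_part ` ?A. fibre y)" unfolding fibre_def by auto
  then have "card ?A \<le> (\<Sum>y\<in>nilpotent_part ` ?A. card (fibre y))"
    by (metis card_UN_le finite_imageI finite_kernel_power)
  also have "\<dots> \<le> card (nilpotent_part ` ?A) * card (kernel_power 1)"
    using sum_bounded_above[of _ "\<lambda>y. card (fibre y)"] card_fibre by auto
  also have "\<dots> \<le> card (kernel_power k) * card (kernel_power 1)"
    using card_mono[OF finite_kernel_power image] by simp
  finally show ?thesis by (simp add: mult.commute)
qed

definition fixed_space :: "nat \<Rightarrow> 'k set" where
  "fixed_space j = {x \<in> V. (u ^^ (2 ^ j)) x = x}"

lemma fixed_space_eq_kernel_power: "fixed_space j = kernel_power (2 ^ j)"
  unfolding fixed_space_def kernel_power_def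
  using funpow_nilpotent_part_2_power add_eq_0_iff_eq by (auto simp: two_eq_zero)

lemma zero_in_fixed_space: "0 \<in> fixed_space j"
  unfolding fixed_space_eq_kernel_power using subspace_over_zero[OF subspace_kernel_power] .

lemma fixed_space_subset: "fixed_space j \<subseteq> V"
  unfolding fixed_space_def by auto

lemma finite_fixed_space: "finite (fixed_space j)"
  using finite_subset[OF fixed_space_subset finite_V] .

lemma fixed_space_mono: "i \<le> j \<Longrightarrow> fixed_space i \<subseteq> fixed_space j"
  unfolding fixed_space_eq_kernel_power by (intro kernel_power_mono) simp

lemma fixed_space_eq_V:
  assumes "N \<le> j"
  shows "fixed_space j = V"
proof -
  have "fixed_space N = V" unfolding fixed_space_def using u_order by auto
  then show ?thesis using fixed_space_mono[OF assms] fixed_space_subset by blast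
qed

lemma fixed_space_stable:
  assumes "fixed_space j = fixed_space (Suc j)" "j \<le> l"
  shows "fixed_space l = fixed_space j"
proof -
  have "kernel_power (2 ^ j) = kernel_power (Suc (2 ^ j))"
    using assms(1) kernel_power_mono[of "2 ^ j" "Suc (2 ^ j)"]
      kernel_power_mono[of "Suc (2 ^ j)" "2 ^ Suc j"]
    unfolding fixed_space_eq_kernel_power by auto
  then have "kernel_power (2 ^ l) = kernel_power (2 ^ j)"
    by (rule kernel_power_stable) (simp add: assms(2))
  then show ?thesis unfolding fixed_space_eq_kernel_power .
qed

lemma card_fixed_space_mono:
  "i \<le> j \<Longrightarrow> \<exists>e. card (fixed_space j) = card K ^ e * card (fixed_space i) \<and>
    (fixed_space i \<noteq> fixed_space j \<longrightarrow> 1 \<le> e)"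
  unfolding fixed_space_eq_kernel_power by (rule card_kernel_power_mono) simp

lemma u_fixed_space: "x \<in> fixed_space j \<Longrightarrow> u x \<in> fixed_space j"
  using funpow_u_in_V[of x 1] unfolding fixed_space_def by (auto simp: funpow_swap1[symmetric])

definition u_on :: "nat \<Rightarrow> 'k \<Rightarrow> 'k" where
  "u_on j = induced_perm u (fixed_space j)"

lemma u_on_permutes: "u_on j permutes fixed_space j"
  unfolding u_on_def
  by (rule induced_perm_permutes[OF finite_fixed_space inj_on_subset[OF u_inj_on fixed_space_subset]])
    (use u_fixed_space in blast)

lemma permutation_u_on: "permutation (u_on j)"
  using u_on_permutes finite_fixed_space permutation_permutes by blast

lemma u_on_0: "u_on 0 = id"
  unfolding u_on_def fixed_space_def induced_perm_def by auto

lemma u_on_eq_u: "fixed_space j = V \<Longrightarrow> u_on j = u"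
  unfolding u_on_def induced_perm_def using permutes_not_in[OF u_permutes] by auto

definition layer :: "nat \<Rightarrow> 'k set" where
  "layer j = fixed_space (Suc j) - fixed_space j"

lemma layer_subset: "layer j \<subseteq> V"
  unfolding layer_def using fixed_space_subset by blast

lemma u_layer: "x \<in> layer j \<Longrightarrow> u x \<in> layer j"
proof -
  assume x: "x \<in> layer j"
  have "u x \<notin> fixed_space j"
  proof
    assume "u x \<in> fixed_space j"
    then have "u ((u ^^ (2 ^ j)) x) = u x" unfolding fixed_space_def by (simp add: funpow_swap1)
    then have "x \<in> fixed_space j"
      using x funpow_u_in_V inj_onD[OF u_inj_on] fixed_space_subset
      unfolding layer_def fixed_space_def by auto
    then show False using x unfolding layer_def by blast
  qed
  then show ?thesis using u_fixed_space x unfolding layer_def by blast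
qed

lemma card_layer: "card (layer j) = card (fixed_space (Suc j)) - card (fixed_space j)"
  unfolding layer_def using card_Diff_subset[OF finite_fixed_space fixed_space_mono] by simp

lemma
  shows layer_permutes: "induced_perm u (layer j) permutes layer j"
    and least_power_layer: "x \<in> layer j \<Longrightarrow> least_power (induced_perm u (layer j)) x = 2 ^ Suc j"
proof -
  let ?p = "induced_perm u (layer j)"
  have finite: "finite (layer j)" unfolding layer_def using finite_fixed_space by simp
  show p_permutes: "?p permutes layer j"
    by (rule induced_perm_permutes[OF finite inj_on_subset[OF u_inj_on layer_subset]])
      (use u_layer in blast)
  have perm: "permutation ?p" using p_permutes finite permutation_permutes by blast
  assume x: "x \<in> layer j"
  have funpow_p: "(?p ^^ i) x = (u ^^ i) x \<and> (u ^^ i) x \<in> layer j" for i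
    using x by (induction i) (auto simp: u_layer)
  have "(u ^^ (2 ^ Suc j)) x = x" "(u ^^ (2 ^ j)) x \<noteq> x"
    using x fixed_space_subset unfolding layer_def fixed_space_def by auto
  then have "least_power ?p x dvd 2 ^ Suc j" "\<not> least_power ?p x dvd 2 ^ j"
    using funpow_p[of "2 ^ j"] funpow_p[of "2 ^ Suc j"] by (simp_all add: least_power_dvd[OF perm])
  then show "least_power ?p x = 2 ^ Suc j" by (rule dvd_prime_power_Suc_eq[OF two_is_prime_nat])
qed

lemma u_on_Suc: "u_on (Suc j) = u_on j \<circ> induced_perm u (layer j)"
proof
  fix x
  have "fixed_space j \<subseteq> fixed_space (Suc j)" by (rule fixed_space_mono) simp
  then show "u_on (Suc j) x = (u_on j \<circ> induced_perm u (layer j)) x"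
    using u_fixed_space[of x j] u_layer[of x j] unfolding u_on_def layer_def
    by (cases "x \<in> fixed_space j"; cases "x \<in> fixed_space (Suc j)") auto
qed

lemma evenperm_u_on_Suc:
  "2 ^ Suc j dvd card (layer j) \<and>
    (evenperm (u_on (Suc j)) \<longleftrightarrow> (evenperm (u_on j) \<longleftrightarrow> even (card (layer j) div 2 ^ Suc j)))"
proof -
  have finite: "finite (layer j)" unfolding layer_def using finite_fixed_space by simp
  have "\<forall>x\<in>layer j. least_power (induced_perm u (layer j)) x = 2 ^ Suc j"
    using least_power_layer by blast
  then have layer: "2 ^ Suc j dvd card (layer j) \<and>
      (evenperm (induced_perm u (layer j)) \<longleftrightarrow> even ((2 ^ Suc j - 1) * (card (layer j) div 2 ^ Suc j)))"
    by (intro evenperm_uniform_cycle_length[OF layer_permutes finite]) simp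
  have "permutation (induced_perm u (layer j))"
    using layer_permutes finite permutation_permutes by blast
  moreover have "odd (2 ^ Suc j - 1 :: nat)" by simp
  ultimately show ?thesis
    using layer evenperm_comp[OF permutation_u_on] u_on_Suc by simp
qed

lemma even_card_fixed_space_iff: "even (card (fixed_space j)) \<longleftrightarrow> even (card (fixed_space 0))"
proof (induction j)
  case (Suc j)
  have "card (fixed_space (Suc j)) = card (fixed_space j) + card (layer j)"
    using card_layer card_mono[OF finite_fixed_space fixed_space_mono[of j "Suc j"]] by simp
  moreover have "(2::nat) dvd 2 ^ Suc j" by simp
  then have "even (card (layer j))" using conjunct1[OF evenperm_u_on_Suc[of j]] by (rule dvd_trans)
  ultimately show ?case using Suc by simp
qed simp

lemma even_card_K: "even (card K)"
proof -
  obtain m where "card K = 2 ^ m" using card_subfield_CHAR_2[OF CHAR_2 subfield_K finite_K] .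
  then show ?thesis using subfield_card_gt_1[OF subfield_K finite_K] by (cases m) auto
qed

lemma card_fixed_space_dvd:
  assumes "i \<le> j"
  shows "card (fixed_space i) dvd card (fixed_space j)"
proof -
  obtain e where "card (fixed_space j) = card K ^ e * card (fixed_space i)"
    using card_fixed_space_mono[OF assms] by blast
  then show ?thesis by simp
qed

lemma card_fixed_space_Suc_dvd:
  "fixed_space i \<noteq> fixed_space (Suc i) \<Longrightarrow> 2 * card (fixed_space i) dvd card (fixed_space (Suc i))"
proof -
  assume "fixed_space i \<noteq> fixed_space (Suc i)"
  moreover obtain e where "card (fixed_space (Suc i)) = card K ^ e * card (fixed_space i)"
    and "fixed_space i \<noteq> fixed_space (Suc i) \<longrightarrow> 1 \<le> e"
    using card_fixed_space_mono[of i "Suc i"] by auto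
  moreover have "2 dvd card K ^ e" if "1 \<le> e" using even_card_K that by simp
  ultimately show ?thesis by (simp add: mult_dvd_mono)
qed

lemma power_dvd_card_fixed_space_propagate:
  assumes "2 ^ (j + 2) dvd card (fixed_space j)" "j \<le> i" "fixed_space i \<noteq> fixed_space (Suc i)"
  shows "2 ^ (i + 2) dvd card (fixed_space i)"
  using assms(2,3)
proof (induction i rule: dec_induct)
  case base
  then show ?case using assms(1) by simp
next
  case (step i)
  have "fixed_space i \<noteq> fixed_space (Suc i)"
    using fixed_space_stable[of i "Suc (Suc i)"] step.prems by auto
  then have "2 * 2 ^ (i + 2) dvd 2 * card (fixed_space i)" using step.IH by simp
  then have "2 * 2 ^ (i + 2) dvd card (fixed_space (Suc i))"
    using card_fixed_space_Suc_dvd[OF \<open>fixed_space i \<noteq> fixed_space (Suc i)\<close>] by (rule dvd_trans)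
  then show ?case by simp
qed

text \<open>The divisibility propagates to all later nontrivial steps of the chain, so every
  later layer contributes an even number of cycles.\<close>

lemma evenperm_u_on_eq:
  assumes "2 ^ (j + 2) dvd card (fixed_space j)" "j \<le> i"
  shows "evenperm (u_on i) \<longleftrightarrow> evenperm (u_on j)"
  using assms(2)
proof (induction i rule: dec_induct)
  case (step i)
  have "2 ^ (i + 2) dvd card (layer i)"
  proof (cases "fixed_space i = fixed_space (Suc i)")
    case False
    then have "2 ^ (i + 2) dvd card (fixed_space i)"
      using power_dvd_card_fixed_space_propagate[OF assms(1) step.hyps(1)] by blast
    moreover have "card (fixed_space i) dvd card (fixed_space (Suc i))"
      by (rule card_fixed_space_dvd) simp
    ultimately have "2 ^ (i + 2) dvd card (fixed_space (Suc i))"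
      by (rule dvd_trans)
    moreover note \<open>2 ^ (i + 2) dvd card (fixed_space i)\<close>
    ultimately show ?thesis unfolding card_layer by (rule dvd_diff_nat)
  qed (simp add: layer_def)
  then have "even (card (layer i) div 2 ^ Suc i)"
    by (auto simp: dvd_def)
  then show ?case using step.IH evenperm_u_on_Suc[of i] by simp
qed simp

lemma evenperm_u_iff_u_on:
  assumes "2 ^ (j + 2) dvd card (fixed_space j)"
  shows "evenperm u \<longleftrightarrow> evenperm (u_on j)"
  using evenperm_u_on_eq[OF assms, of "N + j"] u_on_eq_u[OF fixed_space_eq_V[of "N + j"]] by simp

lemma card_fixed_space_1:
  assumes "card K = 2" "card (fixed_space 0) = 2" "fixed_space 0 \<noteq> V"
  shows "card (fixed_space 1) = 4"
proof -
  have "fixed_space 0 \<noteq> fixed_space (Suc 0)"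
  proof
    assume "fixed_space 0 = fixed_space (Suc 0)"
    then have "fixed_space N = fixed_space 0" by (rule fixed_space_stable) simp
    then show False using fixed_space_eq_V[of N] assms(3) by simp
  qed
  then have "4 dvd card (fixed_space 1)"
    using card_fixed_space_Suc_dvd[of 0] assms(2) by simp
  moreover have "card (fixed_space 1) \<le> 4"
    using card_kernel_power_Suc_le[of 1] assms(2)
    unfolding fixed_space_eq_kernel_power by (simp add: numeral_2_eq_2)
  moreover have "fixed_space 1 \<noteq> {}" using zero_in_fixed_space by blast
  then have "card (fixed_space 1) \<noteq> 0" using finite_fixed_space by simp
  ultimately show ?thesis using dvd_imp_le[of 4 "card (fixed_space 1)"] by linarith
qed

lemma fixed_space_3_eq_2:
  assumes "card K = 2" "card (fixed_space 1) = 4" "card (fixed_space 2) = 8"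
  shows "fixed_space 3 = fixed_space 2"
proof -
  have K2: "kernel_power 2 = fixed_space 1"
    using fixed_space_eq_kernel_power[of 1] by simp
  have K4: "kernel_power 4 = fixed_space 2"
    using fixed_space_eq_kernel_power[of 2] by simp
  have K8: "kernel_power 8 = fixed_space 3"
    using fixed_space_eq_kernel_power[of 3] by simp
  have "kernel_power 2 \<noteq> kernel_power (Suc 2)"
  proof
    assume "kernel_power 2 = kernel_power (Suc 2)"
    then have "kernel_power 4 = kernel_power 2" by (rule kernel_power_stable) simp
    then show False using K2 K4 assms(2,3) by simp
  qed
  then obtain e where "card (kernel_power 3) = 2 ^ e * 4" "1 \<le> e"
    using card_kernel_power_mono[of 2 "Suc 2"] K2 assms(1,2) by (auto simp: numeral_3_eq_3)
  then have "8 \<le> card (kernel_power 3)"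
    using power_increasing[of 1 e "2::nat"] by simp
  moreover have subset: "kernel_power 3 \<subseteq> kernel_power 4" by (rule kernel_power_mono) simp
  moreover have "card (kernel_power 4) = 8" using K4 assms(3) by simp
  ultimately have "card (kernel_power 3) = card (kernel_power 4)"
    using card_mono[OF finite_kernel_power subset] by simp
  then have "kernel_power 3 = kernel_power (Suc 3)"
    using card_subset_eq[OF finite_kernel_power subset] by simp
  then have "kernel_power 8 = kernel_power 3" by (rule kernel_power_stable) simp
  then show ?thesis using K4 K8 \<open>kernel_power 3 = kernel_power (Suc 3)\<close> by simp
qed

text \<open>
  Here \<open>F\<^sub>0\<close> is a line over \<open>\<bbbF>\<^sub>2\<close>, so the kernels of the powers of \<open>u - id\<close> grow by at
  most a factor 2 at each step: \<open>|F\<^sub>1| = 4\<close>, and \<open>|F\<^sub>2| = 8\<close> forces \<open>F\<^sub>3 = F\<^sub>2\<close>. The layers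
  \<open>F\<^sub>1 - F\<^sub>0\<close> and \<open>F\<^sub>2 - F\<^sub>1\<close> both contribute an odd number of cycles.
\<close>

lemma evenperm_u_card_fixed_space_0_eq_2:
  assumes "card K = 2" "card V \<noteq> 4" "card (fixed_space 0) = 2"
  shows "evenperm u"
proof (cases "fixed_space 0 = V")
  case True
  then show ?thesis using u_on_eq_u u_on_0 by simp
next
  case False
  have card_1: "card (fixed_space 1) = 4" using card_fixed_space_1[OF assms(1,3) False] .
  have odd_1: "\<not> evenperm (u_on 1)"
    using evenperm_u_on_Suc[of 0] card_layer[of 0] card_1 assms(3) u_on_0 by simp
  have "fixed_space 1 \<noteq> fixed_space (Suc 1)"
  proof
    assume "fixed_space 1 = fixed_space (Suc 1)"
    then have "fixed_space (N + 1) = fixed_space 1" by (rule fixed_space_stable) simp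
    then show False using fixed_space_eq_V[of "N + 1"] card_1 assms(2) by simp
  qed
  then obtain e where e: "card (fixed_space 2) = 2 ^ e * 4" "1 \<le> e"
    using card_fixed_space_mono[of 1 2] card_1 assms(1) by (auto simp: numeral_2_eq_2)
  have "card (layer 1) = 4 * (2 ^ e - 1)"
    using card_layer[of 1] e(1) card_1 by (simp add: numeral_2_eq_2 diff_mult_distrib2)
  moreover have "odd ((2::nat) ^ e - 1)" using e(2) by simp
  ultimately have even_2: "evenperm (u_on 2)"
    using evenperm_u_on_Suc[of 1] odd_1 by (simp add: numeral_2_eq_2)
  show ?thesis
  proof (cases "2 \<le> e")
    case True
    then have "2 ^ (2 + 2) dvd card (fixed_space 2)"
      using e(1) le_imp_power_dvd[OF True, of "2::nat"] by (auto elim!: dvdE)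
    then show ?thesis using evenperm_u_iff_u_on even_2 by blast
  next
    case False
    then have "e = 1" using e(2) by simp
    then have "card (fixed_space 2) = 8" using e(1) by simp
    then have "fixed_space 2 = fixed_space (Suc 2)"
      using fixed_space_3_eq_2[OF assms(1) card_1] by simp
    then have "fixed_space (N + 2) = fixed_space 2" by (rule fixed_space_stable) simp
    then show ?thesis using fixed_space_eq_V[of "N + 2"] u_on_eq_u even_2 by simp
  qed
qed

lemma evenperm_u:
  assumes "\<not> (card K = 2 \<and> card V = 4)"
  shows "evenperm u"
proof (cases "fixed_space 0 = V")
  case True
  then show ?thesis using u_on_eq_u u_on_0 by simp
next
  case False
  obtain m where m: "card K = 2 ^ m" using card_subfield_CHAR_2[OF CHAR_2 subfield_K finite_K] .
  have subspace_0: "subspace_over K {0}" unfolding subspace_over_def by simp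
  obtain e where e: "card (fixed_space 0) = card K ^ e"
    using card_subspace_over_power[OF subfield_K finite_K subspace_0 subspace_kernel_power,
        of "2 ^ 0"] zero_in_fixed_space[of 0] finite_fixed_space[of 0]
    unfolding fixed_space_eq_kernel_power by auto
  obtain e' where "card V = card K ^ e' * card {0 :: 'k}" "V \<noteq> {0} \<longrightarrow> 1 \<le> e'"
    using card_subspace_over_power[OF subfield_K finite_K subspace_0 subspace_V _ finite_V] V_zero
    by auto
  moreover have "V \<noteq> {0}" using False zero_in_fixed_space[of 0] fixed_space_subset[of 0] by auto
  ultimately have "even (card V)" using even_card_K by simp
  then have "even (card (fixed_space 0))"
    using even_card_fixed_space_iff[of N] fixed_space_eq_V[of N] by simp
  then have "1 \<le> m * e" using e m by (cases "m * e") (auto simp: power_mult)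
  show ?thesis
  proof (cases "2 \<le> m * e")
    case True
    then have "2 ^ (0 + 2) dvd card (fixed_space 0)"
      using e m le_imp_power_dvd[OF True, of "2::nat"] by (simp add: power_mult)
    then have "evenperm u \<longleftrightarrow> evenperm (u_on 0)" by (rule evenperm_u_iff_u_on)
    then show ?thesis using u_on_0 by simp
  next
    case False
    then have "m * e = 1" using \<open>1 \<le> m * e\<close> by linarith
    then have "m = 1" "e = 1" by simp_all
    then show ?thesis
      using evenperm_u_card_fixed_space_0_eq_2 assms e m by simp
  qed
qed

end

lemma evenperm_linear_permutation:
  fixes K V :: "'k::field set"
  assumes "CHAR('k) = 2" "subfield K" "finite K" "subspace_over K V" "finite V"
    and "g permutes V"
    and "\<And>x y. x \<in> V \<Longrightarrow> y \<in> V \<Longrightarrow> g (x + y) = g x + g y"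
    and "\<And>c x. c \<in> K \<Longrightarrow> x \<in> V \<Longrightarrow> g (c * x) = c * g x"
    and "\<not> (card K = 2 \<and> card V = 4)"
  shows "evenperm g"
proof -
  have perm: "permutation g" using assms(5,6) permutation_permutes by blast
  obtain M where M: "g ^^ M = id" "0 < M" using permutation_is_nilpotent[OF perm] by blast
  obtain r where r: "M = 2 ^ multiplicity 2 M * r" "odd r"
    using multiplicity_decompose'[of M 2] M(2) by auto
  define u where "u = g ^^ r"
  have "u ^^ (2 ^ multiplicity 2 M) = id"
    unfolding u_def using M(1) r(1) by (simp add: funpow_mult mult.commute)
  moreover have g_in_V: "x \<in> V \<Longrightarrow> (g ^^ i) x \<in> V" for x i
    using permutes_in_image[OF permutes_funpow[OF assms(6)]] by blast
  moreover have "u (x + y) = u x + u y" if "x \<in> V" "y \<in> V" for x y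
    unfolding u_def using that by (induction r) (auto simp: assms(7) g_in_V)
  moreover have "u (c * x) = c * u x" if "c \<in> K" "x \<in> V" for c x
    unfolding u_def using that by (induction r) (auto simp: assms(8) g_in_V)
  moreover have "u permutes V" unfolding u_def by (rule permutes_funpow[OF assms(6)])
  ultimately interpret unipotent_linear_perm K V u "multiplicity 2 M"
    using assms(1-5) by unfold_locales auto
  show ?thesis using evenperm_u[OF assms(9)] evenperm_funpow[OF perm, of r] r(2) u_def by simp
qed

lemma evenperm_induced_perm_linear:
  fixes K V :: "'k::field set"
  assumes "CHAR('k) = 2" "subfield K" "finite K" "subspace_over K V" "finite V"
    and "inj_on f V" "f ` V \<subseteq> V"
    and "\<And>x y. x \<in> V \<Longrightarrow> y \<in> V \<Longrightarrow> f (x + y) = f x + f y"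
    and "\<And>c x. c \<in> K \<Longrightarrow> x \<in> V \<Longrightarrow> f (c * x) = c * f x"
    and "\<not> (card K = 2 \<and> card V = 4)"
  shows "induced_perm f V permutes V" and "evenperm (induced_perm f V)"
proof -
  show "induced_perm f V permutes V" using induced_perm_permutes[OF assms(5-7)] .
  then show "evenperm (induced_perm f V)"
    using subspace_over_add[OF assms(4)] subspace_over_scale[OF assms(4)] assms(8,9)
    by (intro evenperm_linear_permutation[OF assms(1-5) _ _ _ assms(10)]) auto
qed

theorem theorem8:
  fixes F :: "'k::field set" and L :: "'k poly" and q n :: nat
  assumes char2: "CHAR('k) = 2"
    and q_pow2: "\<exists>m\<ge>1. q = 2 ^ m"
    and F_field: "subfield F"
    and F_contains_Fq: "\<exists>K. subfield K \<and> K \<subseteq> F \<and> finite K \<and> card K = q"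
    and L_coeffs: "\<forall>i. coeff L i \<in> F"
    and L_qpoly: "q_polynomial q n L"
    and L_splits_distinct: "card {x. poly L x = 0} = degree L"
    and exc: "\<not> (q = 2 \<and> n = 2)"
  shows "\<forall>\<sigma>\<in>galois_group F L.
           induced_perm \<sigma> (nonzero_roots L) permutes (nonzero_roots L) \<and>
           evenperm (induced_perm \<sigma> (nonzero_roots L))"
proof
  fix \<sigma> assume \<sigma>: "\<sigma> \<in> galois_group F L"
  obtain m where m: "q = CHAR('k) ^ m" using q_pow2 char2 by auto
  obtain K where K: "subfield K" "K \<subseteq> F" "finite K" "card K = q" using F_contains_Fq by blast
  define R where "R = {x. poly L x = 0}"
  have "1 < q" using subfield_card_gt_1[OF K(1,3)] K(4) by simp
  then have card_R: "card R = q ^ n"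
    using L_splits_distinct degree_q_polynomial[OF _ L_qpoly] unfolding R_def by simp
  then have "finite R" using card_ge_0_finite[of R] \<open>1 < q\<close> by simp
  have "\<not> (card K = 2 \<and> card R = 4)"
    using exc K(4) card_R power_inject_exp[of 2 n 2] by auto
  then have "induced_perm \<sigma> R permutes R \<and> evenperm (induced_perm \<sigma> R)"
    using evenperm_induced_perm_linear[OF char2 K(1,3) _ \<open>finite R\<close>]
      subspace_over_roots_q_polynomial[OF _ m K(1,3,4) L_qpoly] char2
      galois_group_roots[OF \<sigma> L_coeffs K(2)] unfolding R_def by simp
  moreover have "nonzero_roots L = R - {0}" unfolding nonzero_roots_def R_def by auto
  ultimately show "induced_perm \<sigma> (nonzero_roots L) permutes nonzero_roots L \<and>
      evenperm (induced_perm \<sigma> (nonzero_roots L))"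
    using galois_group_roots(3)[OF \<sigma> L_coeffs K(2)] induced_perm_Diff_fixpoint[of \<sigma> 0 R]
      permutes_Diff_fixpoint[of "induced_perm \<sigma> R" R 0] by (simp add: induced_perm_def)
qed

end
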